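(* Let $\boldsymbol{a},\boldsymbol{b},\boldsymbol{c}\in\mathbb{R}^3$ be pairwise distinct points carrying vorticity vectors $\boldsymbol{\omega}(\boldsymbol{a}),\boldsymbol{\omega}(\boldsymbol{b}),\boldsymbol{\omega}(\boldsymbol{c})\in\mathbb{R}^3$. With $D$ and $F_{\boldsymbol{\omega}}$ as defined in the context, \[D(\boldsymbol{a},\boldsymbol{b},\boldsymbol{c})+D(\boldsymbol{c},\boldsymbol{b},\boldsymbol{a})=(\boldsymbol{\omega}(\boldsymbol{b})\cdot\nabla_{\boldsymbol{b}})\big[F_{\boldsymbol{\omega}}(\boldsymbol{a},\boldsymbol{b},\boldsymbol{c})+F_{\boldsymbol{\omega}}(\boldsymbol{c},\boldsymbol{b},\boldsymbol{a})\big],\] where on the right the directional derivative in direction $\boldsymbol{\omega}(\boldsymbol{b})$ is taken with respect to the position $\boldsymbol{b}$, with $\boldsymbol{a},\boldsymbol{c},\boldsymbol{\omega}(\boldsymbol{a}),\boldsymbol{\omega}(\boldsymbol{c})$ held fixed.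
   Context: Interaction energy: for vorticity vectors $\boldsymbol{\beta},\boldsymbol{\gamma}_0$ at distinct points $\boldsymbol{b},\boldsymbol{c}$, \[I(\boldsymbol{\beta},\boldsymbol{\gamma}_0,\boldsymbol{c}-\boldsymbol{b})=\frac{1}{16\pi\|\boldsymbol{c}-\boldsymbol{b}\|}\Big[\boldsymbol{\beta}\cdot\boldsymbol{\gamma}_0+\frac{(\boldsymbol{\beta}\cdot(\boldsymbol{c}-\boldsymbol{b}))(\boldsymbol{\gamma}_0\cdot(\boldsymbol{c}-\boldsymbol{b}))}{\|\boldsymbol{c}-\boldsymbol{b}\|^2}\Big].\] The velocity induced at position $\boldsymbol{b}$ by the vorticity at $\boldsymbol{a}$ is $\boldsymbol{v}_{\boldsymbol{a}}(\boldsymbol{b})=\frac{1}{4\pi}\frac{\boldsymbol{\omega}(\boldsymbol{a})\times(\boldsymbol{b}-\boldsymbol{a})}{\|\boldsymbol{a}-\boldsymbol{b}\|^3}$ (Biot–Savart); under the vorticity form of the 3D Euler equations it moves $\boldsymbol{b}$ at rate $\boldsymbol{v}_{\boldsymbol{a}}(\boldsymbol{b})$ and changes the vorticity at $\boldsymbol{b}$ at rate $(\boldsymbol{\omega}(\boldsymbol{b})\cdot\nabla_{\boldsymbol{b}})\boldsymbol{v}_{\boldsymbol{a}}(\boldsymbol{b})$. The effect of $\boldsymbol{a}$'s induced velocity on $\boldsymbol{b}$ on the interaction energy between $\boldsymbol{b}$ and $\boldsymbol{c}$ is \[D(\boldsymbol{a},\boldsymbol{b},\boldsymbol{c})=\nabla_{\boldsymbol{b}}I(\boldsymbol{\beta},\boldsymbol{\omega}(\boldsymbol{c}),\boldsymbol{c}-\boldsymbol{b})\big|_{\boldsymbol{\beta}=\boldsymbol{\omega}(\boldsymbol{b})}\cdot\boldsymbol{v}_{\boldsymbol{a}}(\boldsymbol{b})+\nabla_{\boldsymbol{\beta}}I(\boldsymbol{\beta},\boldsymbol{\omega}(\boldsymbol{c}),\boldsymbol{c}-\boldsymbol{b})\big|_{\boldsymbol{\beta}=\boldsymbol{\omega}(\boldsymbol{b})}\cdot\big((\boldsymbol{\omega}(\boldsymbol{b})\cdot\nabla_{\boldsymbol{b}})\boldsymbol{v}_{\boldsymbol{a}}(\boldsymbol{b})\big),\]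 with the position gradient in the first term taken holding the vorticity argument $\boldsymbol{\beta}$ fixed. The interaction energy flow is \[F_{\boldsymbol{\omega}}(\boldsymbol{a},\boldsymbol{b},\boldsymbol{c})=\frac{1}{64\pi^2}\left[\frac{((\boldsymbol{a}-\boldsymbol{b})\times\boldsymbol{\omega}(\boldsymbol{a}))\cdot\boldsymbol{\omega}(\boldsymbol{c})}{\|\boldsymbol{a}-\boldsymbol{b}\|^3\,\|\boldsymbol{c}-\boldsymbol{b}\|}+\frac{\big(((\boldsymbol{b}-\boldsymbol{a})\times(\boldsymbol{b}-\boldsymbol{c}))\cdot\boldsymbol{\omega}(\boldsymbol{a})\big)\big((\boldsymbol{b}-\boldsymbol{c})\cdot\boldsymbol{\omega}(\boldsymbol{c})\big)}{\|\boldsymbol{a}-\boldsymbol{b}\|^3\,\|\boldsymbol{c}-\boldsymbol{b}\|^3}\right].\] *)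

theory Defs
  imports "HOL-Analysis.Analysis"
begin

text \<open>Interaction energy I(beta, gamma0, r), with r = c - b.\<close>
definition inter_energy :: "real^3 \<Rightarrow> real^3 \<Rightarrow> real^3 \<Rightarrow> real" where
  "inter_energy \<beta> \<gamma> r =
     (1 / (16 * pi * norm r)) * (\<beta> \<bullet> \<gamma> + ((\<beta> \<bullet> r) * (\<gamma> \<bullet> r)) / (norm r)^2)"

text \<open>Biot-Savart velocity induced at x by vorticity wa located at a.\<close>
definition induced_vel :: "real^3 \<Rightarrow> real^3 \<Rightarrow> real^3 \<Rightarrow> real^3" where
  "induced_vel a wa x = (1 / (4 * pi * (norm (a - x))^3)) *\<^sub>R cross3 wa (x - a)"

text \<open>D(a,b,c): gradients written as Frechet derivatives applied to a direction.\<close>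
definition Dflow :: "real^3 \<Rightarrow> real^3 \<Rightarrow> real^3 \<Rightarrow> real^3 \<Rightarrow> real^3 \<Rightarrow> real^3 \<Rightarrow> real" where
  "Dflow a wa b wb c wc =
     frechet_derivative (\<lambda>x. inter_energy wb wc (c - x)) (at b) (induced_vel a wa b)
   + frechet_derivative (\<lambda>\<beta>. inter_energy \<beta> wc (c - b)) (at wb)
       (frechet_derivative (\<lambda>x. induced_vel a wa x) (at b) wb)"

definition Fflow :: "real^3 \<Rightarrow> real^3 \<Rightarrow> real^3 \<Rightarrow> real^3 \<Rightarrow> real^3 \<Rightarrow> real" where
  "Fflow a wa b c wc =
     (1 / (64 * pi^2)) *
     ((cross3 (a - b) wa \<bullet> wc) / ((norm (a - b))^3 * norm (c - b))
      + ((cross3 (b - a) (b - c) \<bullet> wa) * ((b - c) \<bullet> wc))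
          / ((norm (a - b))^3 * (norm (c - b))^3))"

end

(*
  F_omega(a,b,c) is the interaction energy I(v_a(b), omega(c), c - b) of the velocity
  induced by a with the vorticity at c. Differentiating it along omega(b) produces the same
  stretching term I((omega(b).grad) v_a, omega(c), c - b) as D(a,b,c), so the two differ only by the
  position derivative of I, taken once in direction v_a(b) with vorticity argument omega(b) and once
  with these two roles exchanged. This antisymmetric part of the position derivative is half the
  triple product of v_a(b), omega(b) and v_c(b), which changes sign when a and c are exchanged.
*)

theory Submission
  imports Defs
begin

lemma inner_cross3_cross3:
  fixes a b c d :: "real^3"
  shows "cross3 a b \<bullet> cross3 c d = (a \<bullet> c) * (b \<bullet> d) - (a \<bullet> d) * (b \<bullet> c)"
  by (simp add: cross3_simps)

lemma inner_cross3_cyclic: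
  fixes u v w :: "real^3"
  shows "cross3 u w \<bullet> v + cross3 v w \<bullet> u = 0"
  by (simp add: cross3_simps)

lemma bounded_bilinear_cross3: "bounded_bilinear cross3"
  using bilinear_cross bilinear_conv_bounded_bilinear by blast

lemmas has_derivative_cross3 [derivative_intros] = bounded_bilinear.FDERIV[OF bounded_bilinear_cross3]

lemma has_derivative_norm_compose [derivative_intros]:
  fixes f :: "'a::real_normed_vector \<Rightarrow> 'b::real_inner"
  assumes "(f has_derivative f') (at x within S)" "f x \<noteq> 0"
  shows "((\<lambda>y. norm (f y)) has_derivative (\<lambda>h. (f x \<bullet> f' h) / norm (f x))) (at x within S)"
  using has_derivative_compose[OF assms(1) has_derivative_norm[OF assms(2)]]
  by (simp add: sgn_div_norm inner_commute divide_inverse mult.commute)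

lemma frechet_derivative_add:
  assumes "f differentiable at x" "g differentiable at x"
  shows "frechet_derivative (\<lambda>y. f y + g y) (at x) =
         (\<lambda>h. frechet_derivative f (at x) h + frechet_derivative g (at x) h)"
  using has_derivative_add[OF assms[unfolded frechet_derivative_works]]
  by (simp add: frechet_derivative_at[symmetric])

definition inter_energy_pos_deriv :: "real^3 \<Rightarrow> real^3 \<Rightarrow> real^3 \<Rightarrow> real^3 \<Rightarrow> real" where
  "inter_energy_pos_deriv \<beta> \<gamma> r h =
     (1 / (16 * pi)) * (((\<beta> \<bullet> h) * (\<gamma> \<bullet> r) + (\<beta> \<bullet> r) * (\<gamma> \<bullet> h) - (\<beta> \<bullet> \<gamma>) * (r \<bullet> h)) / norm r ^ 3
                       - 3 * (\<beta> \<bullet> r) * (\<gamma> \<bullet> r) * (r \<bullet> h) / norm r ^ 5)"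

lemma inter_energy_pos_deriv_uminus [simp]:
  "inter_energy_pos_deriv \<beta> \<gamma> r (- h) = - inter_energy_pos_deriv \<beta> \<gamma> r h"
  unfolding inter_energy_pos_deriv_def by (simp add: diff_divide_distrib add_divide_distrib)

lemma inter_energy_pos_deriv_zero [simp]: "inter_energy_pos_deriv \<beta> \<gamma> r 0 = 0"
  by (simp add: inter_energy_pos_deriv_def)

lemma inter_energy_zero_left [simp]: "inter_energy 0 \<gamma> r = 0"
  by (simp add: inter_energy_def)

lemma has_derivative_inter_energy [derivative_intros]:
  assumes "(f has_derivative f') (at x within S)" "(g has_derivative g') (at x within S)" "g x \<noteq> 0"
  shows "((\<lambda>y. inter_energy (f y) \<gamma> (g y)) has_derivative
           (\<lambda>h. inter_energy (f' h) \<gamma> (g x) + inter_energy_pos_deriv (f x) \<gamma> (g x) (g' h)))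
         (at x within S)"
  unfolding inter_energy_def
  apply (rule derivative_eq_intros assms refl | simp add: assms)+
  apply (rule ext)
  using assms(3) by (simp add: inter_energy_pos_deriv_def inner_commute field_simps eval_nat_numeral)

lemma inter_energy_pos_deriv_antisym:
  assumes "c \<noteq> b"
  shows "inter_energy_pos_deriv \<beta> wc (c - b) h - inter_energy_pos_deriv h wc (c - b) \<beta> =
         (cross3 \<beta> h \<bullet> induced_vel c wc b) / 2"
proof -
  define q where "q = c - b"
  have Q: "norm q \<noteq> 0" using assms by (simp add: q_def)
  have "inter_energy_pos_deriv \<beta> wc q h - inter_energy_pos_deriv h wc q \<beta> =
        ((h \<bullet> wc) * (\<beta> \<bullet> q) - (h \<bullet> q) * (\<beta> \<bullet> wc)) / (8 * pi * norm q ^ 3)"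
    unfolding inter_energy_pos_deriv_def by (simp add: inner_commute divide_simps) (simp add: algebra_simps)
  also have "\<dots> = (cross3 h \<beta> \<bullet> cross3 wc q) / (8 * pi * norm q ^ 3)"
    by (simp add: inner_cross3_cross3 inner_commute)
  also have "\<dots> = (cross3 \<beta> h \<bullet> induced_vel c wc b) / 2"
  proof -
    have "cross3 wc (b - c) = - cross3 wc q"
      by (metis cross_minus_right minus_diff_eq q_def)
    with Q show ?thesis
      unfolding induced_vel_def by (simp add: norm_minus_commute cross_skew[of h] q_def)
  qed
  finally show ?thesis by (simp add: q_def)
qed

lemma induced_vel_differentiable:
  assumes "x \<noteq> a"
  shows "induced_vel a wa differentiable (at x)"
  unfolding differentiable_def induced_vel_def[abs_def]
  using assms by (auto intro!: exI derivative_eq_intros)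

lemma Fflow_eq_inter_energy: "Fflow a wa x c wc = inter_energy (induced_vel a wa x) wc (c - x)"
proof -
  have "cross3 wa (x - a) = cross3 (a - x) wa"
    by (simp add: cross3_simps)
  moreover have "cross3 (x - a) (x - c) \<bullet> wa * ((x - c) \<bullet> wc) =
                 cross3 (a - x) wa \<bullet> (c - x) * (wc \<bullet> (c - x))"
    by (simp add: cross3_simps)
  ultimately show ?thesis
    unfolding Fflow_def inter_energy_def induced_vel_def
    by (simp add: norm_minus_commute[of x] add_divide_distrib power2_eq_square eval_nat_numeral mult_ac)
qed

lemma has_derivative_Fflow:
  assumes "x \<noteq> a" "x \<noteq> c"
  shows "((\<lambda>y. Fflow a wa y c wc) has_derivative
           (\<lambda>h. inter_energy (frechet_derivative (induced_vel a wa) (at x) h) wc (c - x)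
                - inter_energy_pos_deriv (induced_vel a wa x) wc (c - x) h)) (at x)"
proof -
  have "(induced_vel a wa has_derivative frechet_derivative (induced_vel a wa) (at x)) (at x)"
    using induced_vel_differentiable[OF assms(1)] by (simp add: frechet_derivative_works)
  moreover have "((\<lambda>y. c - y) has_derivative uminus) (at x)"
    by (rule derivative_eq_intros refl | simp)+
  ultimately show ?thesis
    unfolding Fflow_eq_inter_energy
    by (rule has_derivative_eq_rhs[OF has_derivative_inter_energy]) (use assms in auto)
qed

lemma Dflow_eq:
  assumes "c \<noteq> b"
  shows "Dflow a wa b wb c wc =
         inter_energy (frechet_derivative (induced_vel a wa) (at b) wb) wc (c - b)
         - inter_energy_pos_deriv wb wc (c - b) (induced_vel a wa b)"
proof -
  have "((\<lambda>x. inter_energy wb wc (c - x)) has_derivative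
          (\<lambda>h. - inter_energy_pos_deriv wb wc (c - b) h)) (at b)"
    by (rule has_derivative_eq_rhs[OF has_derivative_inter_energy])
      (use assms in \<open>auto intro!: derivative_eq_intros\<close>)
  moreover have "((\<lambda>\<beta>. inter_energy \<beta> wc (c - b)) has_derivative
                   (\<lambda>h. inter_energy h wc (c - b))) (at wb)"
    by (rule has_derivative_eq_rhs[OF has_derivative_inter_energy])
      (use assms in \<open>auto intro!: derivative_eq_intros\<close>)
  ultimately show ?thesis
    unfolding Dflow_def by (simp add: frechet_derivative_at[symmetric])
qed

lemma Dflow_eq_deriv_Fflow_plus_triple:
  assumes "b \<noteq> a" "b \<noteq> c"
  shows "Dflow a wa b wb c wc =
         frechet_derivative (\<lambda>x. Fflow a wa x c wc) (at b) wb
         + (cross3 (induced_vel a wa b) wb \<bullet> induced_vel c wc b) / 2"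
proof -
  have "frechet_derivative (\<lambda>x. Fflow a wa x c wc) (at b) wb =
        inter_energy (frechet_derivative (induced_vel a wa) (at b) wb) wc (c - b)
        - inter_energy_pos_deriv (induced_vel a wa b) wc (c - b) wb"
    using frechet_derivative_at[OF has_derivative_Fflow[OF assms], symmetric] by simp
  with Dflow_eq[OF assms(2)[symmetric], of a wa wb wc]
    inter_energy_pos_deriv_antisym[OF assms(2)[symmetric], of "induced_vel a wa b" wc wb]
  show ?thesis by linarith
qed

theorem proposition3:
  fixes a b c wa wb wc :: "real^3"
  assumes "a \<noteq> b" and "b \<noteq> c" and "a \<noteq> c"
  shows "Dflow a wa b wb c wc + Dflow c wc b wb a wa =
         frechet_derivative (\<lambda>x. Fflow a wa x c wc + Fflow c wc x a wa) (at b) wb"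
proof -
  have ba: "b \<noteq> a" and bc: "b \<noteq> c" using assms by auto
  have "(\<lambda>x. Fflow a wa x c wc) differentiable at b" "(\<lambda>x. Fflow c wc x a wa) differentiable at b"
    using has_derivative_Fflow[OF ba bc, of wa wc] has_derivative_Fflow[OF bc ba, of wc wa]
    by (auto intro: differentiableI)
  then have "frechet_derivative (\<lambda>x. Fflow a wa x c wc + Fflow c wc x a wa) (at b) wb =
             frechet_derivative (\<lambda>x. Fflow a wa x c wc) (at b) wb
             + frechet_derivative (\<lambda>x. Fflow c wc x a wa) (at b) wb"
    by (simp add: frechet_derivative_add)
  with Dflow_eq_deriv_Fflow_plus_triple[OF ba bc, of wa wb wc]
    Dflow_eq_deriv_Fflow_plus_triple[OF bc ba, of wc wb wa]
    inner_cross3_cyclic[of "induced_vel a wa b" wb "induced_vel c wc b"]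
  show ?thesis by linarith
qed

end
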